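(* Assume the setting below and fix $m\in\mathbb{N}$. Let $r=r_m$ be such that the matrix $\mathbf{M}=(P^t(0,j))_{1\le t\le r,0\le j\le m}$ has rank $m+1$. Then for every $k\in\mathbb{N}$ there is a real matrix $A_k$ (with rows indexed by $\{0,\dots,m\}^k$ and columns by $\{1,\dots,r\}^k$), depending only on $q,m,k$, such that for every stochastic scenery $\eta$ with $\ell\le m$ and every bounded measurable $\phi$ with $\int_{\mathbb{R}}\phi\,d\alpha=0$, $$\mathbf{Q}^k(\phi)=A_k\,\mathbf{p}^k(\phi).$$ (One may take $A_k$ to be a left inverse of the $k$-fold tensor power $\mathbf{M}^{\otimes k}$.)
   Context: Setting: $q$ is a probability mass function on $\mathbb{Z}$ with $\sum_z zq(z)=0$, $\sum_z z^2q(z)<\infty$, $q(z)=q(-z)$ for all $z$, $\gcd\{n\ge1:q^{*n}(0)>0\}=1$, and support generating $\mathbb{Z}$; $S$ is the random walk with increment law $q$, $P^t(z,w)=P[S_t=w\mid S_0=z]$. $\alpha\in\mathcal{P}(\mathbb{R})$ is a reference measure, and a stochastic scenery $\eta:\mathbb{Z}\to\mathcal{P}(\mathbb{R})$ with $\eta(z)\neq\alpha$ for at least one and at most finitely many $z$; the observations $(X_n)$ are, conditionally on $S$, independent with law $\eta(S_n)$. Let $a=\min\{j:\eta(j)\neq\alpha\}$, $b=\max\{j:\eta(j)\neq\alpha\}$, $\ell=b-a$. For bounded measurable $\phi$, $\langle\phi\rangle_z=\int_{\mathbb{R}}\phi\,d\eta(z)$. For $\mathbf{t}=(t_1,\dots,t_k)\in\mathbb{N}^k$,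 $p_{\mathbf{t}}(\phi)=\sum_{z\in\mathbb{Z}}E[\phi(X_0)\phi(X_{t_1})\cdots\phi(X_{t_1+\cdots+t_k})\mid S_0=z]$, and $\mathbf{p}^k(\phi)$ is the vector $(p_{\mathbf{t}}(\phi))_{\mathbf{t}\in\{1,\dots,r\}^k}$. For $\mathbf{d}=(d_1,\dots,d_k)\in\{0,1,\dots,m\}^k$, $$Q^k_{\mathbf{d}}(\phi)=\sum_{\substack{(z_1,\dots,z_{k+1})\in\mathbb{Z}^{k+1}\\ |z_{j+1}-z_j|=d_j,\ j=1,\dots,k}}\langle\phi\rangle_{z_1}\langle\phi\rangle_{z_2}\cdots\langle\phi\rangle_{z_{k+1}},$$ and $\mathbf{Q}^k(\phi)=(Q^k_{\mathbf{d}}(\phi))_{\mathbf{d}\in\{0,\dots,m\}^k}$. *)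

theory Defs
  imports "HOL-Probability.Probability" "Jordan_Normal_Form.DL_Rank"
begin

definition admissible_q :: "int pmf \<Rightarrow> bool" where
  "admissible_q q \<longleftrightarrow>
     integrable (measure_pmf q) (\<lambda>z. (real_of_int z)^2)
   \<and> measure_pmf.expectation q real_of_int = 0
   \<and> (\<forall>z. pmf q z = pmf q (-z))
   \<and> (\<forall>G::int set. (0 \<in> G \<and> (\<forall>x\<in>G. \<forall>y\<in>G. x + y \<in> G \<and> - x \<in> G) \<and> set_pmf q \<subseteq> G)
          \<longrightarrow> G = UNIV)"

fun walk :: "int pmf \<Rightarrow> nat \<Rightarrow> int \<Rightarrow> int pmf" where
  "walk q 0 z = return_pmf z"
| "walk q (Suc t) z = bind_pmf (walk q t z) (\<lambda>x. map_pmf (\<lambda>y. x + y) q)"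

definition aperiodic_q :: "int pmf \<Rightarrow> bool" where
  "aperiodic_q q \<longleftrightarrow> Gcd {n::nat. n \<ge> 1 \<and> pmf (walk q n 0) 0 > 0} = 1"

definition Ptrans :: "int pmf \<Rightarrow> nat \<Rightarrow> int \<Rightarrow> int \<Rightarrow> real" where
  "Ptrans q t z w = pmf (walk q t z) w"

fun walk_path :: "int pmf \<Rightarrow> nat \<Rightarrow> int \<Rightarrow> int list pmf" where
  "walk_path q 0 z = return_pmf [z]"
| "walk_path q (Suc n) z =
     bind_pmf (walk_path q n z) (\<lambda>s. map_pmf (\<lambda>y. s @ [last s + y]) q)"

definition scenery :: "real measure \<Rightarrow> (int \<Rightarrow> real measure) \<Rightarrow> bool" where
  "scenery \<alpha> \<eta> \<longleftrightarrow> prob_space \<alpha> \<and> sets \<alpha> = sets borel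
     \<and> (\<forall>z. prob_space (\<eta> z) \<and> sets (\<eta> z) = sets borel)
     \<and> finite {z. \<eta> z \<noteq> \<alpha>} \<and> {z. \<eta> z \<noteq> \<alpha>} \<noteq> {}"

definition scenery_len :: "real measure \<Rightarrow> (int \<Rightarrow> real measure) \<Rightarrow> int" where
  "scenery_len \<alpha> \<eta> = Max {z. \<eta> z \<noteq> \<alpha>} - Min {z. \<eta> z \<noteq> \<alpha>}"

text \<open>Joint law of the observations (X_0,...,X_N) given S_0 = z: conditionally on the
  path S, the X_n are independent with law eta(S_n).\<close>
definition obs_law :: "int pmf \<Rightarrow> (int \<Rightarrow> real measure) \<Rightarrow> nat \<Rightarrow> int \<Rightarrow> (nat \<Rightarrow> real) measure" where
  "obs_law q \<eta> N z =
     measure_pmf (walk_path q N z) \<bind> (\<lambda>s. PiM {..N} (\<lambda>i. \<eta> (s ! i)))"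

definition p_t :: "int pmf \<Rightarrow> (int \<Rightarrow> real measure) \<Rightarrow> (real \<Rightarrow> real) \<Rightarrow> nat list \<Rightarrow> real" where
  "p_t q \<eta> \<phi> ts = infsum (\<lambda>z.
      \<integral>x. (\<Prod>i\<in>{0..length ts}. \<phi> (x (sum_list (take i ts)))) \<partial>(obs_law q \<eta> (sum_list ts) z))
    UNIV"

definition site_mean :: "(int \<Rightarrow> real measure) \<Rightarrow> (real \<Rightarrow> real) \<Rightarrow> int \<Rightarrow> real" where
  "site_mean \<eta> \<phi> z = (\<integral>x. \<phi> x \<partial>(\<eta> z))"

definition Qd :: "(int \<Rightarrow> real measure) \<Rightarrow> (real \<Rightarrow> real) \<Rightarrow> nat list \<Rightarrow> real" where
  "Qd \<eta> \<phi> ds = infsum (\<lambda>zs. prod_list (map (site_mean \<eta> \<phi>) zs))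
     {zs. length zs = length ds + 1 \<and> (\<forall>j < length ds. \<bar>zs ! (Suc j) - zs ! j\<bar> = int (ds ! j))}"

definition idx_d :: "nat \<Rightarrow> nat \<Rightarrow> nat list set" where
  "idx_d k m = {ds. length ds = k \<and> set ds \<subseteq> {0..m}}"

definition idx_t :: "nat \<Rightarrow> nat \<Rightarrow> nat list set" where
  "idx_t k r = {ts. length ts = k \<and> set ts \<subseteq> {1..r}}"

text \<open>The r x (m+1) matrix M = (P^t(0,j)), t = 1..r (row i is t = i+1), j = 0..m.\<close>
definition Mmat :: "int pmf \<Rightarrow> nat \<Rightarrow> nat \<Rightarrow> real Matrix.mat" where
  "Mmat q r m = Matrix.mat r (m + 1) (\<lambda>(i, j). Ptrans q (Suc i) 0 (int j))"

end

theory Submission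
  imports Defs
begin

(* Conditionally on the walk, the observations at distinct times are independent, so the summand
   of p_t(phi) for the starting point z is the expectation of f(S_T0) f(S_T1) ... f(S_Tk), where
   f z = <phi>_z and T_i = t_1 + ... + t_i. By the Markov property this is
   f(z) P^t1 (f P^t2 (... f)) (z), a finite sum, since f vanishes outside an interval of length m
   (the scenery equals alpha there, and phi has alpha-mean 0). Symmetry and translation invariance
   give P^t(z, w) = P^t(0, |w - z|), so grouping the paths (z_1, ..., z_(k+1)) by their increments
   yields p^k(phi) = M^(k) Q^k(phi), with M^(k) the k-fold Kronecker power of M. A left inverse B
   of M exists because M has full column rank, and its Kronecker power B^(k) is a left inverse
   of M^(k). *)

section \<open>Integrals over probability mass functions and product measures\<close>

lemma integral_bind_pmf_bounded:
  fixes f :: "'b \<Rightarrow> real"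
  assumes "\<And>x. \<bar>f x\<bar> \<le> B"
  shows "(\<integral>x. f x \<partial>bind_pmf M N) = (\<integral>x. (\<integral>y. f y \<partial>N x) \<partial>M)"
  unfolding measure_pmf_bind
proof (rule integral_bind[where K="count_space UNIV" and B=B and B'=1])
  show "(\<lambda>x. measure_pmf (N x)) \<in> measurable M (subprob_algebra (count_space UNIV))"
    by (auto simp: space_subprob_algebra intro!: prob_space_imp_subprob_space prob_space_measure_pmf)
  show "AE x in M. emeasure (N x) (space (N x)) \<le> ennreal 1"
    by (simp add: measure_pmf.emeasure_space_1)
qed (use assms measure_pmf.finite_measure_axioms in auto)

lemma integral_pmf_cong:
  fixes f g :: "'b \<Rightarrow> real"
  assumes "\<And>x. x \<in> set_pmf M \<Longrightarrow> f x = g x"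
  shows "(\<integral>x. f x \<partial>M) = (\<integral>x. g x \<partial>M)"
  by (rule integral_cong_AE) (use assms in \<open>auto simp: AE_measure_pmf_iff\<close>)

lemma (in prob_space) abs_integral_le_const:
  fixes f :: "'a \<Rightarrow> real"
  assumes "f \<in> borel_measurable M" and "\<And>x. \<bar>f x\<bar> \<le> B"
  shows "\<bar>\<integral>x. f x \<partial>M\<bar> \<le> B"
proof -
  have "integrable M f"
    by (rule integrable_const_bound) (use assms in auto)
  then have "(\<integral>x. \<bar>f x\<bar> \<partial>M) \<le> B"
    by (intro integral_le_const) (use assms in auto)
  then show ?thesis
    using integral_abs_bound[of M f] by linarith
qed

lemma abs_prod_le_power:
  fixes g :: "'b \<Rightarrow> real"
  assumes "\<And>i. \<bar>g i\<bar> \<le> C"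
  shows "\<bar>\<Prod>i\<in>I. g i\<bar> \<le> C ^ card I"
proof (cases "finite I")
  case True
  have "\<bar>\<Prod>i\<in>I. g i\<bar> = (\<Prod>i\<in>I. \<bar>g i\<bar>)" by (simp add: abs_prod)
  also have "\<dots> \<le> (\<Prod>i\<in>I. C)" by (rule prod_mono) (use assms in auto)
  finally show ?thesis by simp
qed simp

lemma integral_PiM_prod_subset:
  fixes f :: "'i \<Rightarrow> 'a \<Rightarrow> real"
  assumes M: "\<And>i. prob_space (M i)" and I: "finite I" and J: "J \<subseteq> I"
    and f: "\<And>j. j \<in> J \<Longrightarrow> integrable (M j) (f j)"
  shows "(\<integral>x. (\<Prod>j\<in>J. f j (x j)) \<partial>PiM I M) = (\<Prod>j\<in>J. integral\<^sup>L (M j) (f j))"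
proof -
  interpret product_prob_space M
    by (simp add: M product_prob_space_def product_prob_space_axioms_def product_sigma_finite_def
        prob_space_imp_sigma_finite)
  define h where "h j = (if j \<in> J then f j else (\<lambda>_. 1))" for j
  have restrict: "(\<Prod>j\<in>I. u j) = (\<Prod>j\<in>J. u j)" if "\<And>j. j \<notin> J \<Longrightarrow> u j = 1" for u :: "'i \<Rightarrow> real"
    by (rule prod.mono_neutral_right) (use I J that in auto)
  have "(\<integral>x. (\<Prod>j\<in>J. f j (x j)) \<partial>PiM I M) = (\<integral>x. (\<Prod>j\<in>I. h j (x j)) \<partial>PiM I M)"
    by (subst restrict) (auto simp: h_def intro!: prod.cong)
  also have "\<dots> = (\<Prod>j\<in>I. integral\<^sup>L (M j) (h j))"
    by (rule product_integral_prod) (use I f in \<open>auto simp: h_def\<close>)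
  also have "\<dots> = (\<Prod>j\<in>J. integral\<^sup>L (M j) (f j))"
    by (subst restrict) (auto simp: h_def M prob_space.prob_space intro!: prod.cong)
  finally show ?thesis .
qed

section \<open>Lists, Kronecker powers and left inverses\<close>

lemma sum_list_take_le: "sum_list (take i ts) \<le> sum_list (ts :: nat list)"
  by (metis append_take_drop_id le_add1 sum_list_append)

lemma sum_list_take_strict_mono:
  fixes ts :: "nat list"
  assumes "\<forall>t\<in>set ts. 1 \<le> t" and "i < j" and "j \<le> length ts"
  shows "sum_list (take i ts) < sum_list (take j ts)"
  using assms(2,3)
proof (induction j)
  case (Suc j)
  have "sum_list (take (Suc j) ts) = sum_list (take j ts) + ts ! j"
    using Suc.prems by (simp add: take_Suc_conv_app_nth)
  moreover have "1 \<le> ts ! j" using assms(1) Suc.prems by auto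
  ultimately show ?case using Suc by (cases "i = j") force+
qed simp

definition lists_of :: "'a set \<Rightarrow> nat \<Rightarrow> 'a list set" where
  "lists_of A n = {xs. length xs = n \<and> set xs \<subseteq> A}"

lemma finite_lists_of: "finite A \<Longrightarrow> finite (lists_of A n)"
  unfolding lists_of_def using finite_lists_length_eq[of A n] by (simp add: conj_commute)

lemma lists_of_0 [simp]: "lists_of A 0 = {[]}"
  unfolding lists_of_def by auto

lemma lists_of_Suc: "lists_of A (Suc n) = (\<lambda>(a, xs). a # xs) ` (A \<times> lists_of A n)"
  unfolding lists_of_def by (auto simp: length_Suc_conv image_iff)

lemma sum_lists_of_Suc:
  assumes "finite A"
  shows "sum F (lists_of A (Suc n)) = (\<Sum>a\<in>A. \<Sum>xs\<in>lists_of A n. F (a # xs))"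
proof -
  have "inj_on (\<lambda>(a, xs). a # xs) (A \<times> lists_of A n)"
    by (auto simp: inj_on_def)
  then show ?thesis
    unfolding lists_of_Suc by (simp add: sum.reindex sum.cartesian_product case_prod_unfold)
qed

lemma sum_mult_group_by:
  fixes F :: "'a \<Rightarrow> real" and G :: "'b \<Rightarrow> real"
  assumes "finite L" "finite D" "h ` L \<subseteq> D"
  shows "(\<Sum>x\<in>L. F x * G (h x)) = (\<Sum>d\<in>D. G d * (\<Sum>x | x \<in> L \<and> h x = d. F x))"
proof -
  have "(\<Sum>x\<in>L. F x * G (h x)) = (\<Sum>d\<in>D. \<Sum>x | x \<in> L \<and> h x = d. F x * G (h x))"
    using sum.group[OF assms, of "\<lambda>x. F x * G (h x)"] by simp
  also have "\<dots> = (\<Sum>d\<in>D. G d * (\<Sum>x | x \<in> L \<and> h x = d. F x))"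
    by (auto simp: sum_distrib_left mult.commute intro!: sum.cong)
  finally show ?thesis .
qed

fun tensor_entry :: "('a \<Rightarrow> 'b \<Rightarrow> real) \<Rightarrow> 'a list \<Rightarrow> 'b list \<Rightarrow> real" where
  "tensor_entry F (x # xs) (y # ys) = F x y * tensor_entry F xs ys"
| "tensor_entry F _ _ = 1"

lemma tensor_entry_left_inverse:
  assumes T: "finite T"
    and BM: "\<And>d e. d \<in> D \<Longrightarrow> e \<in> D \<Longrightarrow> (\<Sum>t\<in>T. B d t * M t e) = (if d = e then 1 else 0)"
  shows "ds \<in> lists_of D k \<Longrightarrow> es \<in> lists_of D k \<Longrightarrow>
    (\<Sum>ts\<in>lists_of T k. tensor_entry B ds ts * tensor_entry M ts es) = (if ds = es then 1 else 0)"
proof (induction k arbitrary: ds es)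
  case (Suc k)
  obtain d ds' e es' where ds: "ds = d # ds'" "d \<in> D" "ds' \<in> lists_of D k"
    and es: "es = e # es'" "e \<in> D" "es' \<in> lists_of D k"
    using Suc.prems unfolding lists_of_Suc by auto
  have "(\<Sum>ts\<in>lists_of T (Suc k). tensor_entry B ds ts * tensor_entry M ts es)
      = (\<Sum>t\<in>T. \<Sum>ts\<in>lists_of T k. B d t * M t e * (tensor_entry B ds' ts * tensor_entry M ts es'))"
    by (simp add: sum_lists_of_Suc[OF T] ds es mult_ac)
  also have "\<dots> = (\<Sum>t\<in>T. B d t * M t e) * (\<Sum>ts\<in>lists_of T k. tensor_entry B ds' ts * tensor_entry M ts es')"
    by (rule sum_product[symmetric])
  finally show ?case
    using BM[OF ds(2) es(2)] Suc.IH[OF ds(3) es(3)] ds es by simp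
qed simp

lemma left_inverse_recovers:
  fixes A :: "'d \<Rightarrow> 't \<Rightarrow> real" and M :: "'t \<Rightarrow> 'd \<Rightarrow> real"
  assumes "finite T" "finite D" "d \<in> D"
    and AM: "\<And>e. e \<in> D \<Longrightarrow> (\<Sum>t\<in>T. A d t * M t e) = (if d = e then 1 else 0)"
    and p: "\<And>t. t \<in> T \<Longrightarrow> p t = (\<Sum>e\<in>D. M t e * Q e)"
  shows "Q d = (\<Sum>t\<in>T. A d t * p t)"
proof -
  have "(\<Sum>t\<in>T. A d t * p t) = (\<Sum>e\<in>D. (\<Sum>t\<in>T. A d t * M t e) * Q e)"
    by (simp add: p sum_distrib_left sum_distrib_right mult_ac sum.swap[of _ T])
  also have "\<dots> = (\<Sum>e\<in>D. if d = e then Q e else 0)"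
    by (intro sum.cong refl) (simp add: AM)
  also have "\<dots> = Q d"
    using assms(2,3) by simp
  finally show ?thesis by (rule sym)
qed

lemma (in vec_space) rank_lt_if_not_distinct_cols:
  assumes "A \<in> carrier_mat n nc" and "\<not> distinct (cols A)"
  shows "rank A < nc"
proof -
  obtain S where S: "maximal S (\<lambda>T. T \<subseteq> set (cols A) \<and> lin_indpt T)"
    using maximal_exists[of "(\<lambda>T. T \<subseteq> set (cols A) \<and> lin_indpt T)" "card (set (cols A))" "{}"]
    by (meson List.finite_set card_mono empty_iff empty_subsetI finite_lin_indpt2 rev_finite_subset)
  then have "card S \<le> card (set (cols A))" by (simp add: card_mono maximal_def)
  also have "\<dots> < length (cols A)"
    using assms(2) card_distinct card_length le_neq_implies_less by blast
  finally show ?thesis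
    using assms(1) rank_card_indpt[OF assms(1) S] by simp
qed

lemma (in vec_space) full_rank_mult_vec_eq_0:
  assumes A: "A \<in> carrier_mat n nc" and rk: "rank A = nc"
    and v: "v \<in> carrier_vec nc" and Av: "A *\<^sub>v v = 0\<^sub>v n"
  shows "v = 0\<^sub>v nc"
proof (rule ccontr)
  assume "v \<noteq> 0\<^sub>v nc"
  then have "distinct (cols A) \<longrightarrow> lin_dep (set (cols A))"
    using lin_depI[OF A v _ Av] by blast
  then show False
    using full_rank_lin_indpt[OF A rk] rank_lt_if_not_distinct_cols[OF A] rk by auto
qed

lemma scalar_prod_self_eq_0:
  fixes w :: "real Matrix.vec"
  assumes "w \<in> carrier_vec n" "w \<bullet> w = 0"
  shows "w = 0\<^sub>v n"
proof -
  have "(\<Sum>i\<in>{0..<n}. w $ i * w $ i) = 0"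
    using assms by (simp add: scalar_prod_def)
  then have "\<forall>i\<in>{0..<n}. w $ i * w $ i = 0"
    by (subst sum_nonneg_eq_0_iff[symmetric]) auto
  then show ?thesis
    using assms(1) by (intro eq_vecI) auto
qed

lemma full_rank_left_inverse:
  fixes A :: "real Matrix.mat"
  assumes A: "A \<in> carrier_mat n nc" and rk: "vec_space.rank n A = nc"
  obtains B where "B \<in> carrier_mat nc n" "B * A = 1\<^sub>m nc"
proof -
  define G where "G = transpose_mat A * A"
  have G: "G \<in> carrier_mat nc nc" using A unfolding G_def by auto
  have "v = 0\<^sub>v nc" if v: "v \<in> carrier_vec nc" and Gv: "G *\<^sub>v v = 0\<^sub>v nc" for v
  proof -
    have Av: "A *\<^sub>v v \<in> carrier_vec n" using A v by auto
    have "G *\<^sub>v v = transpose_mat A *\<^sub>v (A *\<^sub>v v)"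
      unfolding G_def using A v by (simp add: assoc_mult_mat_vec[of _ nc n _ nc])
    then have "(A *\<^sub>v v) \<bullet> (A *\<^sub>v v) = 0\<^sub>v nc \<bullet> v"
      using Gv transpose_vec_mult_scalar[OF A v Av] by simp
    then have "(A *\<^sub>v v) \<bullet> (A *\<^sub>v v) = 0"
      using v by simp
    then have "A *\<^sub>v v = 0\<^sub>v n" by (rule scalar_prod_self_eq_0[OF Av])
    then show "v = 0\<^sub>v nc" by (rule vec_space.full_rank_mult_vec_eq_0[OF A rk v])
  qed
  then have "det G \<noteq> 0"
    using det_0_iff_vec_prod_zero_field[OF G] by blast
  then have "G \<in> Units (ring_mat TYPE(real) nc ())" by (rule det_non_zero_imp_unit[OF G])
  then obtain H where H: "H \<in> carrier_mat nc nc" "H * G = 1\<^sub>m nc"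
    unfolding Units_def ring_mat_def by auto
  have "(H * transpose_mat A) * A = H * G"
    unfolding G_def using H A by (simp add: assoc_mult_mat[of _ nc nc _ n _ nc])
  then show ?thesis
    using that[of "H * transpose_mat A"] H A by auto
qed

section \<open>The random walk\<close>

definition walk_expectation :: "int pmf \<Rightarrow> nat \<Rightarrow> (int \<Rightarrow> real) \<Rightarrow> int \<Rightarrow> real" where
  "walk_expectation q t g x = (\<integral>y. g y \<partial>walk q t x)"

lemma walk_expectation_0 [simp]: "walk_expectation q 0 g x = g x"
  by (simp add: walk_expectation_def)

lemma abs_walk_expectation_le: "(\<And>x. \<bar>g x\<bar> \<le> B) \<Longrightarrow> \<bar>walk_expectation q t g x\<bar> \<le> B"
  unfolding walk_expectation_def by (rule measure_pmf.abs_integral_le_const) auto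

lemma walk_expectation_Suc:
  assumes "\<And>x. \<bar>g x\<bar> \<le> B"
  shows "walk_expectation q (Suc t) g x
       = walk_expectation q t (\<lambda>x'. \<integral>y. g (x' + y) \<partial>q) x"
  unfolding walk_expectation_def walk.simps
  by (subst integral_bind_pmf_bounded[where B=B]) (use assms in auto)

lemma walk_path_length: "s \<in> set_pmf (walk_path q n z) \<Longrightarrow> length s = Suc n"
  by (induction n arbitrary: s) auto

lemma integral_walk_path_markov:
  fixes F :: "int list \<Rightarrow> real" and g :: "int \<Rightarrow> real"
  assumes F: "\<And>s. \<bar>F s\<bar> \<le> B" and g: "\<And>x. \<bar>g x\<bar> \<le> C"
  shows "(\<integral>s. F (take (Suc n) s) * g (last s) \<partial>walk_path q (n + t) z)
       = (\<integral>s. F s * walk_expectation q t g (last s) \<partial>walk_path q n z)"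
  using g
proof (induction t arbitrary: g C)
  case 0
  show ?case
    unfolding add_0_right walk_expectation_0
    by (rule integral_pmf_cong) (auto dest: walk_path_length)
next
  case (Suc t)
  define g' where "g' = (\<lambda>x. \<integral>y. g (x + y) \<partial>q)"
  have g': "\<bar>g' x\<bar> \<le> C" for x
    unfolding g'_def by (rule measure_pmf.abs_integral_le_const) (use Suc.prems in auto)
  have "0 \<le> B" using F[of "[]"] by linarith
  then have Fg: "\<bar>F s * g x\<bar> \<le> B * C" for s x
    unfolding abs_mult by (intro mult_mono) (use F Suc.prems in auto)
  have "(\<integral>s. F (take (Suc n) s) * g (last s) \<partial>walk_path q (n + Suc t) z)
     = (\<integral>s. (\<integral>s'. F (take (Suc n) s') * g (last s') \<partial>map_pmf (\<lambda>y. s @ [last s + y]) q)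
           \<partial>walk_path q (n + t) z)"
    unfolding add_Suc_right walk_path.simps
    by (rule integral_bind_pmf_bounded[where B="B * C"]) (rule Fg)
  also have "\<dots> = (\<integral>s. F (take (Suc n) s) * g' (last s) \<partial>walk_path q (n + t) z)"
  proof (rule integral_pmf_cong)
    fix s assume "s \<in> set_pmf (walk_path q (n + t) z)"
    then have "take (Suc n) (s @ [x]) = take (Suc n) s" for x
      by (simp add: walk_path_length)
    then show "(\<integral>s'. F (take (Suc n) s') * g (last s') \<partial>map_pmf (\<lambda>y. s @ [last s + y]) q)
        = F (take (Suc n) s) * g' (last s)"
      by (simp add: g'_def)
  qed
  also have "\<dots> = (\<integral>s. F s * walk_expectation q t g' (last s) \<partial>walk_path q n z)"
    by (rule Suc.IH) (rule g')
  also have "\<dots> = (\<integral>s. F s * walk_expectation q (Suc t) g (last s) \<partial>walk_path q n z)"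
    by (simp add: walk_expectation_Suc[OF Suc.prems] g'_def)
  finally show ?case .
qed

fun weighted_chain :: "int pmf \<Rightarrow> (int \<Rightarrow> real) \<Rightarrow> (int \<Rightarrow> real) \<Rightarrow> nat list \<Rightarrow> int \<Rightarrow> real" where
  "weighted_chain q f g [] = g"
| "weighted_chain q f g (t # ts) = (\<lambda>z. f z * walk_expectation q t (weighted_chain q f g ts) z)"

lemma weighted_chain_zero: "f z = 0 \<Longrightarrow> weighted_chain q f f ts z = 0"
  by (cases ts) auto

lemma weighted_chain_snoc:
  "weighted_chain q f g (ts @ [t]) = weighted_chain q f (\<lambda>x. f x * walk_expectation q t g x) ts"
  by (induction ts) auto

lemma integral_walk_path_weighted_chain:
  fixes f g :: "int \<Rightarrow> real"
  assumes f: "\<And>x. \<bar>f x\<bar> \<le> C" and g: "\<And>x. \<bar>g x\<bar> \<le> B"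
  shows "(\<integral>s. (\<Prod>i<length ts. f (s ! sum_list (take i ts))) * g (last s) \<partial>walk_path q (sum_list ts) z)
       = weighted_chain q f g ts z"
  using g
proof (induction ts arbitrary: g B rule: rev_induct)
  case Nil
  then show ?case by simp
next
  case (snoc t ts)
  define n where "n = sum_list ts"
  define F where "F s = (\<Prod>i<length ts. f (s ! sum_list (take i ts))) * f (last s)" for s
  have "0 \<le> C" using f[of 0] by linarith
  then have F: "\<bar>F s\<bar> \<le> C ^ length ts * C" for s
    unfolding F_def abs_mult
    by (intro mult_mono) (use abs_prod_le_power[OF f, where I="{..<length ts}"] f in auto)
  have fg: "\<bar>f x * walk_expectation q t g x\<bar> \<le> C * B" for x
    unfolding abs_mult
    by (intro mult_mono) (use f abs_walk_expectation_le[OF snoc.prems] \<open>0 \<le> C\<close> in auto)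
  have "(\<integral>s. (\<Prod>i<length (ts @ [t]). f (s ! sum_list (take i (ts @ [t])))) * g (last s)
          \<partial>walk_path q (n + t) z)
      = (\<integral>s. F (take (Suc n) s) * g (last s) \<partial>walk_path q (n + t) z)"
  proof (rule integral_pmf_cong)
    fix s assume "s \<in> set_pmf (walk_path q (n + t) z)"
    then have len: "n < length s" by (simp add: walk_path_length)
    have "take (Suc n) s ! sum_list (take i ts) = s ! sum_list (take i ts)" for i
      using sum_list_take_le[of i ts] by (simp add: n_def)
    moreover have "last (take (Suc n) s) = s ! n"
      using len by (simp add: take_Suc_conv_app_nth)
    ultimately show "(\<Prod>i<length (ts @ [t]). f (s ! sum_list (take i (ts @ [t])))) * g (last s)
        = F (take (Suc n) s) * g (last s)"
      by (simp add: F_def n_def)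
  qed
  also have "\<dots> = (\<integral>s. F s * walk_expectation q t g (last s) \<partial>walk_path q n z)"
    by (rule integral_walk_path_markov[OF F snoc.prems])
  also have "\<dots> = weighted_chain q f (\<lambda>x. f x * walk_expectation q t g x) ts z"
    unfolding snoc.IH[OF fg, symmetric] F_def n_def by (simp add: mult.assoc)
  finally show ?case by (simp add: weighted_chain_snoc n_def)
qed

lemma walk_shift: "walk q t x = map_pmf ((+) x) (walk q t 0)"
proof (induction t)
  case (Suc t)
  show ?case
    by (auto simp: Suc bind_map_pmf map_bind_pmf pmf.map_comp o_def add.assoc
        intro!: bind_pmf_cong map_pmf_cong)
qed simp

lemma walk_uminus:
  assumes "map_pmf uminus q = q"
  shows "map_pmf uminus (walk q t 0) = walk q t 0"
proof (induction t)
  case (Suc t)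
  have "map_pmf uminus (walk q (Suc t) 0)
      = bind_pmf (walk q t 0) (\<lambda>x. map_pmf (\<lambda>y. - x + y) (map_pmf uminus q))"
    by (auto simp: map_bind_pmf pmf.map_comp o_def intro!: bind_pmf_cong map_pmf_cong)
  also have "\<dots> = bind_pmf (map_pmf uminus (walk q t 0)) (\<lambda>x. map_pmf (\<lambda>y. x + y) q)"
    by (auto simp: assms bind_map_pmf intro!: bind_pmf_cong map_pmf_cong)
  finally show ?case by (simp add: Suc)
qed simp

lemma admissible_q_symmetric:
  assumes "admissible_q q"
  shows "map_pmf uminus q = q"
proof (rule pmf_eqI)
  fix z :: int
  have "pmf (map_pmf uminus q) z = pmf q (- z)"
    using pmf_map_inj'[of uminus q "- z"] by (simp add: inj_def)
  then show "pmf (map_pmf uminus q) z = pmf q z"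
    using assms unfolding admissible_q_def by metis
qed

lemma Ptrans_eq_abs_diff:
  assumes "map_pmf uminus q = q"
  shows "Ptrans q t x w = Ptrans q t 0 \<bar>w - x\<bar>"
proof -
  have pmf_neg: "pmf (walk q t 0) d = pmf (walk q t 0) (- d)" for d
    using pmf_map_inj'[of uminus "walk q t 0" "- d"] by (simp add: inj_def walk_uminus[OF assms])
  have "Ptrans q t x w = pmf (walk q t 0) (w - x)"
    using pmf_map_inj'[of "(+) x" "walk q t 0" "w - x"] by (simp add: Ptrans_def inj_def walk_shift[of q t x])
  also have "\<dots> = pmf (walk q t 0) \<bar>w - x\<bar>"
    using pmf_neg[of "w - x"] by (simp add: abs_if)
  finally show ?thesis unfolding Ptrans_def .
qed

lemma walk_expectation_eq_sum:
  assumes "finite W" "\<And>w. g w \<noteq> 0 \<Longrightarrow> w \<in> W"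
  shows "walk_expectation q t g x = (\<Sum>w\<in>W. Ptrans q t x w * g w)"
  unfolding walk_expectation_def Ptrans_def
  by (subst integral_measure_pmf[OF assms(1)]) (use assms(2) in auto)

fun diffs :: "int list \<Rightarrow> nat list" where
  "diffs (z # w # zs) = nat \<bar>w - z\<bar> # diffs (w # zs)"
| "diffs _ = []"

lemma length_diffs: "length (diffs zs) = length zs - 1"
  by (induction zs rule: diffs.induct) auto

lemma set_diffs_subset: "set zs \<subseteq> {a..a + int m} \<Longrightarrow> set (diffs zs) \<subseteq> {0..m}"
  by (induction zs rule: diffs.induct) auto

lemma diffs_eq_iff:
  "length zs = Suc (length ds) \<Longrightarrow>
   diffs zs = ds \<longleftrightarrow> (\<forall>j < length ds. \<bar>zs ! Suc j - zs ! j\<bar> = int (ds ! j))"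
proof (induction zs arbitrary: ds rule: diffs.induct)
  case (1 z w zs)
  then obtain d ds' where "ds = d # ds'" by (cases ds) auto
  with "1.IH"[of ds'] "1.prems" show ?case
    by (auto simp: All_less_Suc2)
qed auto

lemma weighted_chain_eq_sum:
  assumes q: "map_pmf uminus q = q" and W: "finite W" and f: "\<And>z. f z \<noteq> 0 \<Longrightarrow> z \<in> W"
  shows "weighted_chain q f f ts z
       = (\<Sum>zs\<in>lists_of W (length ts). prod_list (map f (z # zs))
            * tensor_entry (\<lambda>t d. Ptrans q t 0 (int d)) ts (diffs (z # zs)))"
proof (induction ts arbitrary: z)
  case (Cons t ts)
  have "weighted_chain q f f ts w = 0" if "w \<notin> W" for w
    using f that weighted_chain_zero by blast
  then have "weighted_chain q f f (t # ts) z = f z * (\<Sum>w\<in>W. Ptrans q t z w * weighted_chain q f f ts w)"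
    using walk_expectation_eq_sum[OF W] by (metis weighted_chain.simps(2))
  then show ?case
    by (simp add: Cons.IH sum_distrib_left Ptrans_eq_abs_diff[OF q, of t z] mult_ac sum_lists_of_Suc[OF W])
qed simp

section \<open>Observations of the scenery\<close>

lemma integral_obs_law:
  fixes \<eta> :: "int \<Rightarrow> real measure" and F :: "(nat \<Rightarrow> real) \<Rightarrow> real"
  assumes \<eta>: "\<And>z. prob_space (\<eta> z)" "\<And>z. sets (\<eta> z) = sets borel"
    and F: "F \<in> borel_measurable (PiM {..N} (\<lambda>_. borel))" "\<And>x. \<bar>F x\<bar> \<le> B"
  shows "(\<integral>x. F x \<partial>obs_law q \<eta> N z)
       = (\<integral>s. (\<integral>x. F x \<partial>PiM {..N} (\<lambda>i. \<eta> (s ! i))) \<partial>walk_path q N z)"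
  unfolding obs_law_def
proof (rule integral_bind[where K="PiM {..N} (\<lambda>_. borel)" and B=B and B'=1])
  show "(\<lambda>s. PiM {..N} (\<lambda>i. \<eta> (s ! i)))
      \<in> measurable (walk_path q N z) (subprob_algebra (PiM {..N} (\<lambda>_. borel)))"
    by (auto simp: space_subprob_algebra \<eta> intro!: prob_space_imp_subprob_space prob_space_PiM sets_PiM_cong)
  show "AE s in walk_path q N z.
      emeasure (PiM {..N} (\<lambda>i. \<eta> (s ! i))) (space (PiM {..N} (\<lambda>i. \<eta> (s ! i)))) \<le> ennreal 1"
    by (auto intro!: AE_I2 simp: prob_space.emeasure_space_1[OF prob_space_PiM] \<eta>)
qed (use F measure_pmf.finite_measure_axioms in auto)

lemma integral_obs_law_prod:
  fixes \<eta> :: "int \<Rightarrow> real measure" and \<phi> :: "real \<Rightarrow> real"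
  assumes \<eta>: "\<And>z. prob_space (\<eta> z)" "\<And>z. sets (\<eta> z) = sets borel"
    and \<phi>: "\<phi> \<in> borel_measurable borel" "\<And>x. \<bar>\<phi> x\<bar> \<le> C"
    and ts: "\<forall>t\<in>set ts. 1 \<le> t"
  shows "(\<integral>x. (\<Prod>i\<in>{0..length ts}. \<phi> (x (sum_list (take i ts)))) \<partial>obs_law q \<eta> (sum_list ts) z)
       = (\<integral>s. (\<Prod>i\<in>{0..length ts}. site_mean \<eta> \<phi> (s ! sum_list (take i ts)))
            \<partial>walk_path q (sum_list ts) z)"
proof -
  define N where "N = sum_list ts"
  define T where "T i = sum_list (take i ts)" for i
  have T: "T i \<le> N" for i
    unfolding T_def N_def by (rule sum_list_take_le)
  have T_inj: "inj_on T {0..length ts}"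
  proof (rule linorder_inj_onI)
    fix i j assume "i < j" "j \<in> {0..length ts}"
    then show "T i \<noteq> T j"
      using sum_list_take_strict_mono[OF ts, of i j] by (simp add: T_def)
  qed auto
  have \<phi>_int: "integrable (\<eta> z) \<phi>" for z
  proof -
    interpret prob_space "\<eta> z" by (rule \<eta>(1))
    show ?thesis
      by (rule integrable_const_bound[where B=C]) (use \<phi> in \<open>auto simp: measurable_cong_sets[OF \<eta>(2) refl]\<close>)
  qed
  have meas: "(\<lambda>x. \<Prod>i\<in>{0..length ts}. \<phi> (x (T i))) \<in> borel_measurable (PiM {..N} (\<lambda>_. borel))"
  proof (rule borel_measurable_prod)
    show "(\<lambda>x. \<phi> (x (T i))) \<in> borel_measurable (PiM {..N} (\<lambda>_. borel))" for i
      by (rule measurable_compose[OF _ \<phi>(1)], rule measurable_component_singleton) (simp add: T)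
  qed
  have "(\<integral>x. (\<Prod>i\<in>{0..length ts}. \<phi> (x (T i))) \<partial>obs_law q \<eta> N z)
      = (\<integral>s. (\<integral>x. (\<Prod>i\<in>{0..length ts}. \<phi> (x (T i))) \<partial>PiM {..N} (\<lambda>i. \<eta> (s ! i))) \<partial>walk_path q N z)"
    by (rule integral_obs_law[OF \<eta> meas abs_prod_le_power]) (rule \<phi>(2))
  also have "\<dots> = (\<integral>s. (\<Prod>i\<in>{0..length ts}. site_mean \<eta> \<phi> (s ! T i)) \<partial>walk_path q N z)"
  proof (rule Bochner_Integration.integral_cong[OF refl])
    fix s
    have "(\<integral>x. (\<Prod>j\<in>T ` {0..length ts}. \<phi> (x j)) \<partial>PiM {..N} (\<lambda>i. \<eta> (s ! i)))
        = (\<Prod>j\<in>T ` {0..length ts}. site_mean \<eta> \<phi> (s ! j))"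
      unfolding site_mean_def by (rule integral_PiM_prod_subset) (auto simp: \<eta> \<phi>_int T)
    then show "(\<integral>x. (\<Prod>i\<in>{0..length ts}. \<phi> (x (T i))) \<partial>PiM {..N} (\<lambda>i. \<eta> (s ! i)))
        = (\<Prod>i\<in>{0..length ts}. site_mean \<eta> \<phi> (s ! T i))"
      by (simp add: prod.reindex[OF T_inj])
  qed
  finally show ?thesis unfolding N_def T_def .
qed

lemma abs_site_mean_le:
  assumes "prob_space (\<eta> z)" "sets (\<eta> z) = sets borel"
    and "\<phi> \<in> borel_measurable borel" "\<And>x. \<bar>\<phi> x\<bar> \<le> C"
  shows "\<bar>site_mean \<eta> \<phi> z\<bar> \<le> C"
  unfolding site_mean_def
  by (rule prob_space.abs_integral_le_const) (use assms in \<open>auto simp: measurable_cong_sets[OF assms(2) refl]\<close>)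

lemma p_t_eq_sum_weighted_chain:
  fixes \<eta> :: "int \<Rightarrow> real measure" and \<phi> :: "real \<Rightarrow> real"
  assumes \<eta>: "\<And>z. prob_space (\<eta> z)" "\<And>z. sets (\<eta> z) = sets borel"
    and \<phi>: "\<phi> \<in> borel_measurable borel" "\<And>x. \<bar>\<phi> x\<bar> \<le> C"
    and W: "finite W" "\<And>z. site_mean \<eta> \<phi> z \<noteq> 0 \<Longrightarrow> z \<in> W"
    and ts: "\<forall>t\<in>set ts. 1 \<le> t"
  shows "p_t q \<eta> \<phi> ts = (\<Sum>z\<in>W. weighted_chain q (site_mean \<eta> \<phi>) (site_mean \<eta> \<phi>) ts z)"
proof -
  let ?f = "site_mean \<eta> \<phi>"
  have f: "\<bar>?f z\<bar> \<le> C" for z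
    by (rule abs_site_mean_le) (use \<eta> \<phi> in auto)
  have path_prod: "(\<Prod>i\<in>{0..length ts}. ?f (s ! sum_list (take i ts)))
      = (\<Prod>i<length ts. ?f (s ! sum_list (take i ts))) * ?f (last s)"
    if "s \<in> set_pmf (walk_path q (sum_list ts) z)" for s z
  proof -
    have "s ! sum_list ts = last s"
      using walk_path_length[OF that] by (metis diff_Suc_1 last_conv_nth list.size(3) nat.distinct(1))
    then show ?thesis
      by (simp add: atLeast0AtMost lessThan_Suc_atMost[symmetric] prod.lessThan_Suc)
  qed
  have chain: "(\<integral>x. (\<Prod>i\<in>{0..length ts}. \<phi> (x (sum_list (take i ts)))) \<partial>obs_law q \<eta> (sum_list ts) z)
      = weighted_chain q ?f ?f ts z" for z
    unfolding integral_obs_law_prod[OF \<eta> \<phi> ts]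
    by (subst integral_pmf_cong[OF path_prod]) (auto intro: integral_walk_path_weighted_chain f)
  have "p_t q \<eta> \<phi> ts = infsum (weighted_chain q ?f ?f ts) UNIV"
    unfolding p_t_def chain ..
  also have "\<dots> = infsum (weighted_chain q ?f ?f ts) W"
    using W(2) by (intro infsum_cong_neutral) (auto intro: weighted_chain_zero)
  also have "\<dots> = (\<Sum>z\<in>W. weighted_chain q ?f ?f ts z)"
    using W(1) by simp
  finally show ?thesis .
qed

lemma idx_d_eq_lists_of: "idx_d k m = lists_of {0..m} k"
  unfolding idx_d_def lists_of_def ..

lemma idx_t_eq_lists_of: "idx_t k r = lists_of {1..r} k"
  unfolding idx_t_def lists_of_def ..

lemma Qd_eq_sum:
  assumes W: "finite W" and f: "\<And>z. site_mean \<eta> \<phi> z \<noteq> 0 \<Longrightarrow> z \<in> W"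
  shows "Qd \<eta> \<phi> ds = (\<Sum>zs | zs \<in> lists_of W (Suc (length ds)) \<and> diffs zs = ds.
                          prod_list (map (site_mean \<eta> \<phi>) zs))"
proof -
  let ?Z = "{zs. zs \<in> lists_of W (Suc (length ds)) \<and> diffs zs = ds}"
  let ?Q = "{zs. length zs = length ds + 1 \<and> (\<forall>j < length ds. \<bar>zs ! (Suc j) - zs ! j\<bar> = int (ds ! j))}"
  have Z_iff: "zs \<in> ?Z \<longleftrightarrow> zs \<in> ?Q \<and> set zs \<subseteq> W" for zs
    using diffs_eq_iff[of zs ds] by (auto simp: lists_of_def)
  have vanish: "prod_list (map (site_mean \<eta> \<phi>) zs) = 0" if "\<not> set zs \<subseteq> W" for zs
    using that f by (force simp: prod_list_zero_iff)
  have "Qd \<eta> \<phi> ds = infsum (\<lambda>zs. prod_list (map (site_mean \<eta> \<phi>) zs)) ?Z"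
    unfolding Qd_def by (rule infsum_cong_neutral) (use Z_iff vanish in blast)+
  also have "\<dots> = (\<Sum>zs\<in>?Z. prod_list (map (site_mean \<eta> \<phi>) zs))"
    using finite_lists_of[OF W] by simp
  finally show ?thesis .
qed

lemma p_t_eq_tensor_Qd:
  fixes \<eta> :: "int \<Rightarrow> real measure" and \<phi> :: "real \<Rightarrow> real"
  assumes q: "map_pmf uminus q = q"
    and \<eta>: "\<And>z. prob_space (\<eta> z)" "\<And>z. sets (\<eta> z) = sets borel"
    and \<phi>: "\<phi> \<in> borel_measurable borel" "\<And>x. \<bar>\<phi> x\<bar> \<le> C"
    and supp: "\<And>z. site_mean \<eta> \<phi> z \<noteq> 0 \<Longrightarrow> z \<in> {a..a + int m}"
    and ts: "ts \<in> idx_t k r"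
  shows "p_t q \<eta> \<phi> ts = (\<Sum>e\<in>idx_d k m. tensor_entry (\<lambda>t d. Ptrans q t 0 (int d)) ts e * Qd \<eta> \<phi> e)"
proof -
  let ?f = "site_mean \<eta> \<phi>" and ?W = "{a..a + int m}"
  let ?M = "tensor_entry (\<lambda>t d. Ptrans q t 0 (int d)) ts"
  have ts1: "\<forall>t\<in>set ts. 1 \<le> t" and k: "length ts = k"
    using ts unfolding idx_t_def by auto
  have diffs_range: "diffs ` lists_of ?W (Suc k) \<subseteq> idx_d k m"
    using length_diffs set_diffs_subset by (fastforce simp: idx_d_def lists_of_def)
  have "p_t q \<eta> \<phi> ts = (\<Sum>z\<in>?W. weighted_chain q ?f ?f ts z)"
    by (rule p_t_eq_sum_weighted_chain[OF \<eta> \<phi> _ supp ts1]) simp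
  also have "\<dots> = (\<Sum>zs\<in>lists_of ?W (Suc k). prod_list (map ?f zs) * ?M (diffs zs))"
    by (simp add: weighted_chain_eq_sum[OF q _ supp] sum_lists_of_Suc k)
  also have "\<dots> = (\<Sum>e\<in>idx_d k m. ?M e * (\<Sum>zs | zs \<in> lists_of ?W (Suc k) \<and> diffs zs = e. prod_list (map ?f zs)))"
    by (rule sum_mult_group_by) (use diffs_range in \<open>auto simp: finite_lists_of idx_d_eq_lists_of\<close>)
  also have "\<dots> = (\<Sum>e\<in>idx_d k m. ?M e * Qd \<eta> \<phi> e)"
    by (intro sum.cong refl) (simp add: Qd_eq_sum[OF _ supp] idx_d_def)
  finally show ?thesis .
qed

lemma site_mean_support:
  assumes "scenery \<alpha> \<eta>" "scenery_len \<alpha> \<eta> \<le> int m" "(\<integral>x. \<phi> x \<partial>\<alpha>) = 0"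
  obtains a where "\<And>z. site_mean \<eta> \<phi> z \<noteq> 0 \<Longrightarrow> z \<in> {a..a + int m}"
proof
  let ?S = "{z. \<eta> z \<noteq> \<alpha>}"
  fix z assume "site_mean \<eta> \<phi> z \<noteq> 0"
  then have "z \<in> ?S"
    using assms(3) by (auto simp: site_mean_def)
  moreover have "finite ?S"
    using assms(1) by (simp add: scenery_def)
  ultimately have "Min ?S \<le> z" "z \<le> Max ?S"
    by simp_all
  then show "z \<in> {Min ?S..Min ?S + int m}"
    using assms(2) by (simp add: scenery_len_def)
qed

lemma Mmat_left_inverse:
  assumes "vec_space.rank r (Mmat q r m) = m + 1"
  obtains B :: "nat \<Rightarrow> nat \<Rightarrow> real" where
    "\<And>d e. d \<in> {0..m} \<Longrightarrow> e \<in> {0..m} \<Longrightarrow>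
       (\<Sum>t\<in>{1..r}. B d t * Ptrans q t 0 (int e)) = (if d = e then 1 else 0)"
proof -
  have "Mmat q r m \<in> carrier_mat r (m + 1)" unfolding Mmat_def by simp
  then obtain B where B: "B \<in> carrier_mat (m + 1) r" "B * Mmat q r m = 1\<^sub>m (m + 1)"
    using full_rank_left_inverse assms by blast
  have "(\<Sum>t\<in>{1..r}. B $$ (d, t - 1) * Ptrans q t 0 (int e)) = (if d = e then 1 else 0)"
    if "d \<in> {0..m}" "e \<in> {0..m}" for d e
  proof -
    have "(\<Sum>t\<in>{1..r}. B $$ (d, t - 1) * Ptrans q t 0 (int e))
        = (\<Sum>i<r. B $$ (d, i) * Ptrans q (Suc i) 0 (int e))"
      by (rule sum.reindex_bij_witness[of _ Suc "\<lambda>t. t - 1"]) auto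
    also have "\<dots> = (B * Mmat q r m) $$ (d, e)"
      using B(1) that by (simp add: scalar_prod_def Mmat_def atLeast0LessThan)
    finally show ?thesis using B(2) that by simp
  qed
  then show ?thesis by (rule that)
qed

lemma Qd_eq_left_inverse_p_t:
  fixes \<eta> :: "int \<Rightarrow> real measure" and \<phi> :: "real \<Rightarrow> real"
  assumes q: "map_pmf uminus q = q"
    and B: "\<And>d e. d \<in> {0..m} \<Longrightarrow> e \<in> {0..m} \<Longrightarrow>
      (\<Sum>t\<in>{1..r}. B d t * Ptrans q t 0 (int e)) = (if d = e then 1 else 0)"
    and \<eta>: "scenery \<alpha> \<eta>" "scenery_len \<alpha> \<eta> \<le> int m"
    and \<phi>: "\<phi> \<in> borel_measurable borel" "bounded (range \<phi>)" "(\<integral>x. \<phi> x \<partial>\<alpha>) = 0"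
    and ds: "ds \<in> idx_d k m"
  shows "Qd \<eta> \<phi> ds = (\<Sum>ts\<in>idx_t k r. tensor_entry B ds ts * p_t q \<eta> \<phi> ts)"
proof -
  obtain a where supp: "\<And>z. site_mean \<eta> \<phi> z \<noteq> 0 \<Longrightarrow> z \<in> {a..a + int m}"
    using site_mean_support[OF \<eta> \<phi>(3)] by blast
  obtain C where C: "\<And>x. \<bar>\<phi> x\<bar> \<le> C"
    using \<phi>(2) unfolding bounded_real by auto
  have \<eta>_prob: "\<And>z. prob_space (\<eta> z)" "\<And>z. sets (\<eta> z) = sets borel"
    using \<eta>(1) by (simp_all add: scenery_def)
  have p_t: "p_t q \<eta> \<phi> ts
      = (\<Sum>e\<in>idx_d k m. tensor_entry (\<lambda>t d. Ptrans q t 0 (int d)) ts e * Qd \<eta> \<phi> e)"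
    if "ts \<in> idx_t k r" for ts
    by (rule p_t_eq_tensor_Qd[OF q \<eta>_prob \<phi>(1) C supp that])
  have BM: "(\<Sum>ts\<in>idx_t k r. tensor_entry B ds ts * tensor_entry (\<lambda>t d. Ptrans q t 0 (int d)) ts es)
      = (if ds = es then 1 else 0)" if "es \<in> idx_d k m" for es
    unfolding idx_t_eq_lists_of
    by (rule tensor_entry_left_inverse[OF _ B]) (use ds that in \<open>simp_all add: idx_d_eq_lists_of\<close>)
  show ?thesis
    by (rule left_inverse_recovers[where M="tensor_entry (\<lambda>t d. Ptrans q t 0 (int d))"])
      (use ds BM p_t in \<open>simp_all add: idx_t_eq_lists_of idx_d_eq_lists_of finite_lists_of\<close>)
qed

theorem proposition3p3:
  fixes q :: "int pmf" and m r k :: nat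
  assumes "admissible_q q" and "aperiodic_q q"
    and "vec_space.rank r (Mmat q r m) = m + 1"
  shows "\<exists>A :: nat list \<Rightarrow> nat list \<Rightarrow> real.
     \<forall>(\<alpha> :: real measure) (\<eta> :: int \<Rightarrow> real measure) (\<phi> :: real \<Rightarrow> real).
       scenery \<alpha> \<eta> \<and> scenery_len \<alpha> \<eta> \<le> int m
       \<and> \<phi> \<in> borel_measurable borel \<and> bounded (range \<phi>) \<and> (\<integral>x. \<phi> x \<partial>\<alpha>) = 0
       \<longrightarrow> (\<forall>ds \<in> idx_d k m. Qd \<eta> \<phi> ds = (\<Sum>ts \<in> idx_t k r. A ds ts * p_t q \<eta> \<phi> ts))"
proof -
  obtain B where B: "\<And>d e. d \<in> {0..m} \<Longrightarrow> e \<in> {0..m} \<Longrightarrow>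
      (\<Sum>t\<in>{1..r}. B d t * Ptrans q t 0 (int e)) = (if d = e then 1 else 0)"
    using Mmat_left_inverse[OF assms(3)] by blast
  show ?thesis
    using Qd_eq_left_inverse_p_t[OF admissible_q_symmetric[OF assms(1)] B]
    by (intro exI[of _ "tensor_entry B"]) blast
qed

end
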